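(* Let $N\ge 2$, let $0\le p_{g_i}^{\min}\le p_{g_i}^{\max}$ for $i=1,\dots,N$, and let $C$ be a real number (the quantity $CVaR_\alpha(\sum_{i=1}^N s_i^t)$). Assume (a) $\min_{1\le i\le N} p_{g_i}^{\min}\le C\le\sum_{i=1}^N p_{g_i}^{\max}$, and (b) $\max_{1\le i\le N} p_{g_i}^{\min}<\min_{1\le i\le N}\{p_{g_i}^{\max}-p_{g_i}^{\min}\}$. Let $k\in\{1,\dots,N\}$ be the unique index with $\sum_{i=1}^{k-1}p_{g_i}^{\max}<C\le\sum_{i=1}^k p_{g_i}^{\max}$, and suppose $k\ge 2$. If $0<C-\sum_{i=1}^{k-1}p_{g_i}^{\max}<p_{g_k}^{\min}$, then $$p_{g_{k-1}}^{\min}<C-\sum_{i=1}^{k-2}p_{g_i}^{\max}-p_{g_k}^{\min}<p_{g_{k-1}}^{\max}.$$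
   Context: $p_{g_i}^{\min},p_{g_i}^{\max}$ are the minimum and maximum power output of the non-renewable generator at bus $i$; empty sums are zero. *)

theory Defs
  imports Main Complex_Main
begin

end

theory Submission
  imports Defs
begin

(* Writing the partial sum up to k-1 as the one up to k-2 plus pmax (k-1), the middle term equals
   (C - sum up to k-1) + pmax (k-1) - pmin k. The first summand lies in (0, pmin k), which gives the
   upper bound at once; for the lower bound, hypothesis (b) yields pmin k < pmax (k-1) - pmin (k-1). *)

lemma Max_less_Min_imp_less:
  fixes f g :: "'a \<Rightarrow> 'b::linorder"
  assumes "finite A" "i \<in> A" "j \<in> A" "Max (f ` A) < Min (g ` A)"
  shows "f i < g j"
proof -
  have "f i \<le> Max (f ` A)" using assms(1,2) by simp
  moreover have "Min (g ` A) \<le> g j" using assms(1,3) by simp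
  ultimately show ?thesis using assms(4) by order
qed

lemma sum_atLeastAtMost_pred_split:
  fixes f :: "nat \<Rightarrow> 'a::comm_monoid_add"
  assumes "k \<ge> 2"
  shows "(\<Sum>i=1..k-1. f i) = (\<Sum>i=1..k-2. f i) + f (k-1)"
proof -
  have "k - 1 = Suc (k - 2)" using assms by simp
  then show ?thesis by (simp add: sum.cl_ivl_Suc)
qed

theorem lemma1:
  fixes N k :: nat and pmin pmax :: "nat \<Rightarrow> real" and C :: real
  assumes "N \<ge> 2"
    and "\<And>i. i \<in> {1..N} \<Longrightarrow> 0 \<le> pmin i \<and> pmin i \<le> pmax i"
    and "Min (pmin ` {1..N}) \<le> C" and "C \<le> (\<Sum>i=1..N. pmax i)"
    and "Max (pmin ` {1..N}) < Min ((\<lambda>i. pmax i - pmin i) ` {1..N})"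
    and "k \<in> {1..N}"
    and "(\<Sum>i=1..k-1. pmax i) < C" and "C \<le> (\<Sum>i=1..k. pmax i)"
    and "k \<ge> 2"
    and "0 < C - (\<Sum>i=1..k-1. pmax i)" and "C - (\<Sum>i=1..k-1. pmax i) < pmin k"
  shows "pmin (k-1) < C - (\<Sum>i=1..k-2. pmax i) - pmin k
       \<and> C - (\<Sum>i=1..k-2. pmax i) - pmin k < pmax (k-1)"
proof -
  have "k - 1 \<in> {1..N}" using assms(6,9) by auto
  then have "pmin k < pmax (k-1) - pmin (k-1)"
    using Max_less_Min_imp_less[OF _ assms(6) _ assms(5)] by simp
  then show ?thesis
    using sum_atLeastAtMost_pred_split[OF assms(9), of pmax] assms(10,11) by linarith
qed

end
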